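(* For every prime power $q$ of characteristic $p\ge3$, the number $J_{\mathrm{L}}(q)$ of distinct $j$-invariants of the Legendre curves $E_{\mathrm{L},u}$, $u\in\mathbb{F}_q\setminus\{0,1\}$, equals $\left\lfloor\frac{q+5}{6}\right\rfloor$.
   Context: For $u\in\mathbb{F}_q\setminus\{0,1\}$ ($q$ odd), $E_{\mathrm{L},u}$ is the elliptic curve $Y^2=X(X-1)(X-u)$ over $\mathbb{F}_q$, with $j$-invariant $j(E_{\mathrm{L},u})=\frac{2^8(u^2-u+1)^3}{(u^2-u)^2}$. $J_{\mathrm{L}}(q)=\#\{j(E_{\mathrm{L},u}) : u\in\mathbb{F}_q\setminus\{0,1\}\}$, i.e. the number of $\overline{\mathbb{F}}_q$-isomorphism classes represented in this family. *)

theory Defs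
  imports Main
begin

text \<open>j-invariant of the Legendre curve Y^2 = X(X-1)(X-u).\<close>
definition j_legendre :: "'a::field \<Rightarrow> 'a" where
  "j_legendre u = (2^8 * (u^2 - u + 1)^3) / ((u^2 - u)^2)"

definition J_L :: "'a::{field,finite} itself \<Rightarrow> nat" where
  "J_L _ = card (j_legendre ` ((UNIV :: 'a set) - {0, 1}))"

end

theory Submission
  imports Defs
begin

(*
  The j-invariant of the Legendre curve is invariant under the anharmonic group, the group
  of six Moebius maps u, 1-u, 1/u, 1/(1-u), u/(u-1), (u-1)/u permuting {0, 1, infinity}.
  Over a field with 2 \<noteq> 0 the fibres of j_legendre on F_q - {0,1} are exactly the orbits of
  this action, because j(u) - j(v) factors (after clearing denominators) into the six
  linear-fractional relations between u and v.  Hence J_L counts orbits, and a Burnside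
  style count gives it: every u satisfies |orbit(u)| * |stabilizer(u)| = 6, so weighting
  each point by its stabilizer size, every fibre contributes exactly 6.  Summing the
  stabilizer sizes (the identity fixes all q - 2 points, each involution fixes one of
  -1, 2, 1/2, each 3-cycle fixes the roots of u^2 - u + 1) yields
      6 * J_L = q + 1 + 2 * #{u. u^2 - u + 1 = 0}.
*)

text \<open>Characteristic different from 2 means exactly that \<open>2 \<noteq> 0\<close>; this is all the proof uses.\<close>
lemma two_neq_zero_if_CHAR_neq_2:
  assumes "CHAR('a::field) \<noteq> 2"
  shows "(2::'a) \<noteq> 0"
proof
  assume "(2::'a) = 0"
  then have "CHAR('a) dvd 2"
    using of_nat_eq_0_iff_char_dvd[of 2, where 'a = 'a] by simp
  moreover have "CHAR('a) \<noteq> 0"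
    using \<open>CHAR('a) dvd 2\<close> by (metis dvd_0_left_iff zero_neq_numeral)
  moreover have "CHAR('a) \<le> 2"
    using \<open>CHAR('a) dvd 2\<close> by (rule dvd_imp_le) simp
  ultimately show False
    using assms CHAR_not_1[where 'a = 'a] by linarith
qed

definition anharmonic_orbit :: "'a::field \<Rightarrow> 'a set" where
  "anharmonic_orbit u = {u, 1 - u, 1 / u, 1 / (1 - u), u / (u - 1), (u - 1) / u}"

lemma j_legendre_eq_iff_factor:
  fixes u v :: "'a::field"
  assumes "(2::'a) \<noteq> 0" "u \<noteq> 0" "u \<noteq> 1" "v \<noteq> 0" "v \<noteq> 1"
  shows "j_legendre u = j_legendre v \<longleftrightarrow>
     (u - v) * (u + v - 1) * (u * v - 1) * (u * v - u + 1) * (u * v - v + 1) * (u * v - u - v) = 0"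
proof -
  have "(u^2 - u)^2 \<noteq> 0" "(v^2 - v)^2 \<noteq> 0"
    using assms by (simp_all add: power2_eq_square right_diff_distrib[symmetric])
  then have "j_legendre u = j_legendre v \<longleftrightarrow>
      2^8 * ((u^2 - u + 1)^3 * (v^2 - v)^2) = 2^8 * ((v^2 - v + 1)^3 * (u^2 - u)^2)"
    unfolding j_legendre_def by (simp add: frac_eq_eq mult.assoc)
  also have "\<dots> \<longleftrightarrow> (u^2 - u + 1)^3 * (v^2 - v)^2 - (v^2 - v + 1)^3 * (u^2 - u)^2 = 0"
    using power_not_zero[OF assms(1), of 8] by (simp del: power_eq_0_iff)
  also have "(u^2 - u + 1)^3 * (v^2 - v)^2 - (v^2 - v + 1)^3 * (u^2 - u)^2 =
      (u - v) * (u + v - 1) * (u * v - 1) * (u * v - u + 1) * (u * v - v + 1) * (u * v - u - v)"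
    by algebra
  finally show ?thesis .
qed

lemma anharmonic_factor_eq_0_iff:
  fixes u v :: "'a::field"
  assumes "u \<noteq> 0" "u \<noteq> 1"
  shows "(u - v) * (u + v - 1) * (u * v - 1) * (u * v - u + 1) * (u * v - v + 1) * (u * v - u - v) = 0
         \<longleftrightarrow> v \<in> anharmonic_orbit u"
proof -
  have "u - 1 \<noteq> 0" "1 - u \<noteq> 0" using assms by auto
  then have "u + v - 1 = 0 \<longleftrightarrow> v = 1 - u"
    and "u * v - 1 = 0 \<longleftrightarrow> v = 1 / u"
    and "u * v - u + 1 = 0 \<longleftrightarrow> v = (u - 1) / u"
    and "u * v - v + 1 = 0 \<longleftrightarrow> v = 1 / (1 - u)"
    and "u * v - u - v = 0 \<longleftrightarrow> v = u / (u - 1)"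
    using assms by (auto simp: field_simps)
  then show ?thesis unfolding anharmonic_orbit_def by auto
qed

lemma anharmonic_orbit_subset:
  fixes u :: "'a::field"
  assumes "u \<noteq> 0" "u \<noteq> 1"
  shows "anharmonic_orbit u \<subseteq> UNIV - {0, 1}"
  using assms unfolding anharmonic_orbit_def by (auto simp: field_simps)

lemma j_legendre_eq_iff_orbit:
  fixes u v :: "'a::field"
  assumes "(2::'a) \<noteq> 0" "u \<noteq> 0" "u \<noteq> 1" "v \<noteq> 0" "v \<noteq> 1"
  shows "j_legendre v = j_legendre u \<longleftrightarrow> v \<in> anharmonic_orbit u"
  using j_legendre_eq_iff_factor[OF assms] anharmonic_factor_eq_0_iff[OF assms(2,3)] by metis

lemma j_legendre_fiber:
  fixes u :: "'a::field"
  assumes "(2::'a) \<noteq> 0" "u \<noteq> 0" "u \<noteq> 1"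
  shows "{v \<in> UNIV - {0, 1}. j_legendre v = j_legendre u} = anharmonic_orbit u"
  using j_legendre_eq_iff_orbit[OF assms] anharmonic_orbit_subset[OF assms(2,3)] by blast

lemma anharmonic_orbit_eqI:
  fixes u v :: "'a::field"
  assumes "(2::'a) \<noteq> 0" "u \<noteq> 0" "u \<noteq> 1" "v \<in> anharmonic_orbit u"
  shows "anharmonic_orbit v = anharmonic_orbit u"
proof -
  have "v \<noteq> 0" "v \<noteq> 1" using anharmonic_orbit_subset[OF assms(2,3)] assms(4) by auto
  moreover have "j_legendre v = j_legendre u"
    using j_legendre_fiber[OF assms(1-3)] assms(4) by auto
  ultimately show ?thesis
    using j_legendre_fiber[OF assms(1-3)] j_legendre_fiber[OF assms(1), of v] by simp
qed

text \<open>The exceptional orbit of \<open>-1\<close> (the curves with \<open>j = 1728\<close>).\<close>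
lemma anharmonic_orbit_minus_one: "anharmonic_orbit (-1::'a::field) = {-1, 2, 1 / 2}"
proof -
  have "1 - (-1::'a) = 2" "1 / (-1::'a) = -1" "(-1::'a) / (-1 - 1) = 1 / 2" "(-1 - 1) / (-1::'a) = 2"
    by (simp_all add: divide_minus_left)
  then show ?thesis unfolding anharmonic_orbit_def by auto
qed

text \<open>The orbit of a root of \<open>u\<^sup>2 - u + 1\<close>, a primitive sixth root of unity (\<open>j = 0\<close>).\<close>
lemma anharmonic_orbit_sixth_root:
  fixes w :: "'a::field"
  assumes "w * w - w + 1 = 0"
  shows "anharmonic_orbit w = {w, 1 - w}"
proof -
  have "w \<noteq> 0" "1 - w \<noteq> 0" "w - 1 \<noteq> 0" using assms by auto
  moreover have "w * w = w - 1" "(1 - w) * w = 1"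
    using assms by (simp_all add: algebra_simps eq_neg_iff_add_eq_0)
  ultimately have "1 / w = 1 - w" "1 / (1 - w) = w" "w / (w - 1) = 1 - w" "(w - 1) / w = w"
    by (simp_all add: field_simps)
  then show ?thesis unfolding anharmonic_orbit_def by auto
qed

lemma card_anharmonic_orbit_generic:
  fixes u :: "'a::field"
  assumes "u \<noteq> 0" "u \<noteq> 1" "u \<noteq> -1" "u \<noteq> 2" "2 * u \<noteq> 1" "u * u - u + 1 \<noteq> 0"
  shows "card (anharmonic_orbit u) = 6"
proof -
  have "u - 1 \<noteq> 0" "1 - u \<noteq> 0" "u - 2 \<noteq> 0" using assms by auto
  have "u + 1 \<noteq> 0" using assms(3) by (metis eq_neg_iff_add_eq_0)
  have "u * u \<noteq> 1"
  proof
    assume "u * u = 1"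
    then have "(u - 1) * (u + 1) = 0" by (simp add: algebra_simps)
    then show False using \<open>u - 1 \<noteq> 0\<close> \<open>u + 1 \<noteq> 0\<close> by simp
  qed
  moreover have "u * u + 1 \<noteq> u" using assms(6) by (simp add: algebra_simps)
  ultimately have "distinct [u, 1 - u, 1 / u, 1 / (1 - u), u / (u - 1), (u - 1) / u]"
    using assms \<open>u - 1 \<noteq> 0\<close> \<open>1 - u \<noteq> 0\<close> \<open>u - 2 \<noteq> 0\<close> \<open>u + 1 \<noteq> 0\<close>
    by (auto simp: field_simps)
  from distinct_card[OF this] show ?thesis unfolding anharmonic_orbit_def by simp
qed

lemma exceptional_points:
  assumes "(2::'a::field) \<noteq> 0" "(3::'a) \<noteq> 0"
  shows "(-1::'a) \<noteq> 2" "(-1::'a) \<noteq> 1 / 2" "(2::'a) \<noteq> 1 / 2"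
    and "c \<in> {-1, 2, 1 / 2} \<Longrightarrow> c * c - c + (1::'a) \<noteq> 0"
proof -
  have "(4::'a) \<noteq> 1"
  proof
    assume "(4::'a) = 1"
    then have "(3::'a) + 1 = 0 + 1" by simp
    with assms(2) show False by (simp only: add_right_cancel)
  qed
  note assms = assms this
  show "(-1::'a) \<noteq> 2" using assms by (auto simp: field_simps)
  show "(-1::'a) \<noteq> 1 / 2" using assms by (auto simp: field_simps)
  show "(2::'a) \<noteq> 1 / 2" using assms by (auto simp: field_simps)
  have at_minus_one_two: "(-1::'a) * (-1) - (-1) + 1 = 3" "(2::'a) * 2 - 2 + 1 = 3" by simp_all
  have half: "4 * ((1 / 2::'a) * (1 / 2) - 1 / 2 + 1) = 3"
  proof -
    have "4 * (h * h - h + 1) = 3" if "2 * h = 1" for h :: 'a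
    proof -
      have "4 * (h * h - h + 1) = (2 * h) * (2 * h) - 2 * (2 * h) + 4" by algebra
      with that show ?thesis by simp
    qed
    moreover have "2 * (1 / 2::'a) = 1" using assms(1) by simp
    ultimately show ?thesis by blast
  qed
  show "c * c - c + (1::'a) \<noteq> 0" if "c \<in> {-1, 2, 1 / 2}"
    using that assms(2) at_minus_one_two half by (metis empty_iff insertE mult_zero_right)
qed

text \<open>Number of anharmonic maps fixing \<open>u\<close>: the identity; the involutions \<open>u \<mapsto> 1/u\<close>,
  \<open>u \<mapsto> u/(u-1)\<close>, \<open>u \<mapsto> 1-u\<close>, fixing \<open>-1\<close>, \<open>2\<close>, \<open>1/2\<close> respectively; and the two
  3-cycles, fixing the roots of \<open>u\<^sup>2 - u + 1\<close>.\<close>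
definition anharmonic_stabilizer_size :: "'a::field \<Rightarrow> nat" where
  "anharmonic_stabilizer_size u =
     1 + of_bool (u = -1) + of_bool (u = 2) + of_bool (2 * u = 1) + 2 * of_bool (u * u - u + 1 = 0)"

text \<open>Orbit-stabilizer in characteristic 3, where \<open>-1 = 2 = 1/2\<close> is also the double root of
  \<open>u\<^sup>2 - u + 1 = (u + 1)\<^sup>2\<close> and forms an orbit of size one.\<close>
lemma orbit_stabilizer_char_3:
  fixes u :: "'a::field"
  assumes "(3::'a) = 0" "u \<noteq> 0" "u \<noteq> 1"
  shows "card (anharmonic_orbit u) * anharmonic_stabilizer_size u = 6"
proof -
  have "(2::'a) = 3 - 1" by simp
  then have two: "(2::'a) = -1" using assms(1) by simp
  have "(u + 1) * (u + 1) = (u * u - u + 1) + 3 * u" by algebra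
  then have "u * u - u + 1 = (u + 1) * (u + 1)" using assms(1) by simp
  then have root_iff: "u * u - u + 1 = 0 \<longleftrightarrow> u = -1"
    by (simp add: eq_neg_iff_add_eq_0)
  have half_iff: "2 * u = 1 \<longleftrightarrow> u = -1" by (auto simp: two minus_equation_iff)
  have two_iff: "u = 2 \<longleftrightarrow> u = -1" by (simp add: two)
  have stab: "anharmonic_stabilizer_size u = (if u = -1 then 6 else 1)"
    unfolding anharmonic_stabilizer_size_def by (simp only: root_iff half_iff two_iff) simp
  show ?thesis
  proof (cases "u = -1")
    case True
    have "anharmonic_orbit u = {-1}" using True by (simp add: anharmonic_orbit_minus_one two)
    then show ?thesis using True stab by simp
  next
    case False
    then have "card (anharmonic_orbit u) = 6"
      using assms root_iff half_iff two_iff by (intro card_anharmonic_orbit_generic) auto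
    then show ?thesis using False stab by simp
  qed
qed

lemma orbit_stabilizer_char_not_3:
  fixes u :: "'a::field"
  assumes "(2::'a) \<noteq> 0" "(3::'a) \<noteq> 0" "u \<noteq> 0" "u \<noteq> 1"
  shows "card (anharmonic_orbit u) * anharmonic_stabilizer_size u = 6"
proof -
  define h where "h = (1 / 2 :: 'a)"
  note exceptional = exceptional_points[OF assms(1,2), folded h_def]
  have half_iff: "2 * u = 1 \<longleftrightarrow> u = h" unfolding h_def using assms(1) by (auto simp: field_simps)
  consider "u \<in> {-1, 2, h}" | "u * u - u + 1 = 0" | "u \<notin> {-1, 2, h}" "u * u - u + 1 \<noteq> 0"
    by blast
  then show ?thesis
  proof cases
    case 1
    have "(-1::'a) \<noteq> 1" using assms(1) by (metis neg_eq_iff_add_eq_0 one_add_one)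
    then have "anharmonic_orbit u = {-1, 2, h}"
      using 1 anharmonic_orbit_eqI[OF assms(1), of "-1" u]
      by (simp add: anharmonic_orbit_minus_one flip: h_def)
    moreover have "anharmonic_stabilizer_size u = 2"
      using 1 exceptional half_iff unfolding anharmonic_stabilizer_size_def by auto
    ultimately show ?thesis using exceptional by simp
  next
    case 2
    have "u \<noteq> 1 - u" using 2 exceptional(4)[of u] half_iff by (auto simp: algebra_simps)
    then have "card (anharmonic_orbit u) = 2" by (simp add: anharmonic_orbit_sixth_root[OF 2])
    moreover have "anharmonic_stabilizer_size u = 3"
      using 2 exceptional(4)[of u] half_iff unfolding anharmonic_stabilizer_size_def by auto
    ultimately show ?thesis by simp
  next
    case 3
    then have "card (anharmonic_orbit u) = 6"
      using assms half_iff by (intro card_anharmonic_orbit_generic) auto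
    moreover have "anharmonic_stabilizer_size u = 1"
      using 3 half_iff unfolding anharmonic_stabilizer_size_def by auto
    ultimately show ?thesis by simp
  qed
qed

lemma anharmonic_orbit_stabilizer:
  fixes u :: "'a::field"
  assumes "(2::'a) \<noteq> 0" "u \<noteq> 0" "u \<noteq> 1"
  shows "card (anharmonic_orbit u) * anharmonic_stabilizer_size u = 6"
  using assms orbit_stabilizer_char_3[of u] orbit_stabilizer_char_not_3[of u] by blast

lemma card_image_weighted:
  assumes "finite A" "\<And>u. u \<in> A \<Longrightarrow> card {v \<in> A. f v = f u} * w u = c"
  shows "card (f ` A) * c = (\<Sum>u\<in>A. w u)"
proof -
  have fiber_sum: "(\<Sum>u\<in>{v \<in> A. f v = y}. w u) = c" if "y \<in> f ` A" for y
  proof -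
    let ?F = "{v \<in> A. f v = y}"
    obtain u0 where u0: "u0 \<in> ?F" using \<open>y \<in> f ` A\<close> by blast
    have weight: "card ?F * w u = c" if "u \<in> ?F" for u
      using assms(2)[of u] that by simp
    moreover have "card ?F > 0" using u0 assms(1) by (auto simp: card_gt_0_iff)
    ultimately have "w u = w u0" if "u \<in> ?F" for u
      using weight[OF that] weight[OF u0] by (metis mult_left_cancel not_gr0)
    then have "(\<Sum>u\<in>?F. w u) = (\<Sum>u\<in>?F. w u0)" by (rule sum.cong[OF refl])
    also have "\<dots> = c" using weight[OF u0] by simp
    finally show ?thesis .
  qed
  have "(\<Sum>u\<in>A. w u) = (\<Sum>y\<in>f ` A. \<Sum>u\<in>{v \<in> A. f v = y}. w u)"
    by (rule sum.image_gen[OF assms(1)])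
  also have "\<dots> = card (f ` A) * c" using fiber_sum by simp
  finally show ?thesis by simp
qed

lemma sum_anharmonic_stabilizer_size:
  assumes "(2::'a::{field,finite}) \<noteq> 0"
  shows "(\<Sum>u \<in> UNIV - {0, 1::'a}. anharmonic_stabilizer_size u)
           = card (UNIV :: 'a set) + 1 + 2 * card {u::'a. u * u - u + 1 = 0}"
proof -
  let ?A = "UNIV - {0, 1::'a}"
  let ?R = "{u::'a. u * u - u + 1 = 0}"
  have "(-1::'a) \<noteq> 1" using assms by (metis neg_eq_iff_add_eq_0 one_add_one)
  moreover have "(2::'a) \<noteq> 1" by (metis add_cancel_right_right one_add_one zero_neq_one)
  ultimately have "?A \<inter> {u. u = -1} = {-1}" "?A \<inter> {u. u = 2} = {2}" "?A \<inter> {u. 2 * u = 1} = {1 / 2}"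
    using assms by (auto simp: field_simps)
  moreover have "?A \<inter> ?R = ?R" by auto
  moreover have "card ?A + 2 = card (UNIV :: 'a set)"
    using card_Diff_subset[of "{0, 1::'a}" UNIV] card_mono[of UNIV "{0, 1::'a}"] by simp
  moreover have "(\<Sum>u\<in>?A. anharmonic_stabilizer_size u) =
      card ?A + (\<Sum>u\<in>?A. of_bool (u = -1)) + (\<Sum>u\<in>?A. of_bool (u = 2))
        + (\<Sum>u\<in>?A. of_bool (2 * u = 1)) + 2 * (\<Sum>u\<in>?A. of_bool (u * u - u + 1 = 0))"
    unfolding anharmonic_stabilizer_size_def by (simp only: sum.distrib sum_distrib_left[symmetric]) simp
  ultimately show ?thesis by simp
qed

lemma card_sixth_roots_le_2: "card {u::'a::field. u * u - u + 1 = 0} \<le> 2"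
proof (cases "\<exists>w::'a. w * w - w + 1 = 0")
  case True
  then obtain w :: 'a where w: "w * w - w + 1 = 0" by blast
  have "u * u - u + 1 = 0 \<longleftrightarrow> u = w \<or> u = 1 - w" for u
  proof -
    have "(u * u - u + 1) - (w * w - w + 1) = (u - w) * (u - (1 - w))" by algebra
    then show ?thesis using w by auto
  qed
  then have "{u::'a. u * u - u + 1 = 0} = {w, 1 - w}" by auto
  then show ?thesis by (simp add: card_insert_if)
qed simp

lemma six_times_J_L:
  assumes "(2::'a::{field,finite}) \<noteq> 0"
  shows "6 * J_L TYPE('a) = card (UNIV :: 'a set) + 1 + 2 * card {u::'a. u * u - u + 1 = 0}"
proof -
  let ?A = "UNIV - {0, 1::'a}"
  have "card (j_legendre ` ?A) * 6 = (\<Sum>u\<in>?A. anharmonic_stabilizer_size u)"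
  proof (rule card_image_weighted)
    fix u assume "u \<in> ?A"
    then show "card {v \<in> ?A. j_legendre v = j_legendre u} * anharmonic_stabilizer_size u = 6"
      using j_legendre_fiber[OF assms] anharmonic_orbit_stabilizer[OF assms] by auto
  qed simp
  then show ?thesis
    unfolding J_L_def using sum_anharmonic_stabilizer_size[OF assms] by simp
qed

theorem mainTheorem4:
  assumes "CHAR('a::{field,finite}) \<noteq> 2"
  shows "J_L TYPE('a) = (card (UNIV :: 'a set) + 5) div 6"
proof -
  have "6 * J_L TYPE('a) = card (UNIV :: 'a set) + 1 + 2 * card {u::'a. u * u - u + 1 = 0}"
    using six_times_J_L two_neq_zero_if_CHAR_neq_2[OF assms] by blast
  moreover have "card {u::'a. u * u - u + 1 = 0} \<le> 2" by (rule card_sixth_roots_le_2)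
  ultimately show ?thesis by linarith
qed

end
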